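(* Let $m_1,\Theta_1>0$, $\kappa>0$, and $\mathcal{M}_1(\bar w)=(\frac{m_1}{2\pi\Theta_1})^{3/2}\exp(-\frac{m_1|\bar w|^2}{2\Theta_1})$ for $\bar w\in\mathbb{R}^2$. Given $\varrho_0>0$, there exists $\varrho_1>0$ such that $$\int_{\{|\bar w-\bar v|\le\varrho_1\}}\frac{\mathcal{M}_1(\bar w)}{(|\bar v-\bar w|^2+\xi^2)^{1/2}}\,\mathrm{d}\bar w\leq\frac12\int_{\mathbb{R}^2}\frac{\mathcal{M}_1(\bar w)}{(|\bar v-\bar w|^2+\xi^2)^{1/2}}\,\mathrm{d}\bar w$$ for all $\bar v\in\mathbb{R}^2$ and all $\xi\in[0,\varrho_0/(2\kappa)]$. Moreover, setting $\eta=\sqrt{\frac{2\Theta_1}{m_1}}\,\mathrm{erf}^{-1}(\tfrac12)$, such a $\varrho_1$ can be chosen with $\varrho_1\geq\big(\eta^2-\frac{\varrho_0^2}{4\kappa^2}\big)^{1/2}$ whenever $0<\varrho_0<2\kappa\eta$.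
   Context: $\mathrm{erf}(x)=\frac{2}{\sqrt\pi}\int_0^x e^{-t^2}\,\mathrm{d}t$ is the error function and $\mathrm{erf}^{-1}$ its inverse. In the paper $\kappa=\alpha(1-\beta)\in(0,1)$ is the inelasticity parameter of the model. *)

theory Defs
  imports "HOL-Analysis.Analysis"
begin

definition erf :: "real \<Rightarrow> real" where
  "erf x = 2 / sqrt pi * (LBINT t=0..x. exp (- (t^2)))"

text \<open>Inverse of erf (erf is strictly increasing, so THE is well defined on its range).\<close>
definition erf_inv :: "real \<Rightarrow> real" where
  "erf_inv y = (THE x. erf x = y)"

text \<open>The Maxwellian M_1 on R^2, with the normalisation constant as written in the paper.\<close>
definition M1 :: "real \<Rightarrow> real \<Rightarrow> real^2 \<Rightarrow> real" where
  "M1 m\<^sub>1 \<Theta>\<^sub>1 w = (m\<^sub>1 / (2 * pi * \<Theta>\<^sub>1)) powr (3/2) * exp (- (m\<^sub>1 * (norm w)^2 / (2 * \<Theta>\<^sub>1)))"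

end

theory Submission
  imports Defs "HOL-Probability.Distributions"
begin

text \<open>
  Write both integrals in polar coordinates centred at \<open>v\<close>. The two rays \<open>v \<plusminus> r E\<close> of a line
  through \<open>v\<close> contribute \<open>c exp(-a |v|^2) p(r) 2 cosh(2 a (v \<bullet> E) r)\<close>, where \<open>a = m\<^sub>1 / (2 \<Theta>\<^sub>1)\<close>
  and \<open>p(r) = r exp(-a r^2) / sqrt(r^2 + \<xi>^2)\<close>. The cosh factor increases with \<open>r\<close>, so the ball
  of radius \<open>\<rho>\<^sub>1\<close> carries at most half of the mass as soon as \<open>p\<close> does on the half-line,
  i.e. its integral over \<open>[0, \<rho>\<^sub>1]\<close> is at most that over \<open>[\<rho>\<^sub>1, \<infinity>)\<close>. Since \<open>p\<close> has the primitive
  \<open>sqrt pi / (2 sqrt a) exp(a \<xi>^2) erf(sqrt a sqrt(r^2 + \<xi>^2))\<close>, this reads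
  \<open>2 erf(sqrt a sqrt(\<rho>\<^sub>1^2 + \<xi>^2)) \<le> 1 + erf(sqrt a \<xi>)\<close>. It holds whenever \<open>\<rho>\<^sub>1^2 + \<xi>^2 \<le> \<eta>^2\<close>,
  because \<open>sqrt a \<eta> = erf_inv (1/2)\<close>; when \<open>\<xi>\<close> may exceed \<open>\<eta>\<close>, the \<open>2/sqrt pi\<close>-Lipschitz bound on erf
  shows that \<open>\<rho>\<^sub>1 = sqrt pi (1 - erf (sqrt a \<rho>\<^sub>0/(2\<kappa>))) / (4 sqrt a)\<close> works for all admissible \<open>\<xi>\<close>.
\<close>

section \<open>Polar coordinates in the plane\<close>

lemma vector_pair_eq: "vector [x, y] = x *\<^sub>R axis 1 1 + y *\<^sub>R (axis 2 1 :: real^2)"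
  by (simp add: vec_eq_iff forall_2 axis_def)

lemma measurable_vector_pair [measurable]:
  fixes f g :: "'a \<Rightarrow> real"
  assumes [measurable]: "f \<in> borel_measurable M" "g \<in> borel_measurable M"
  shows "(\<lambda>x. vector [f x, g x] :: real^2) \<in> borel_measurable M"
proof -
  have pair: "(\<lambda>x. (f x, g x)) \<in> M \<rightarrow>\<^sub>M borel"
    by (simp add: borel_prod[symmetric])
  have vec: "(\<lambda>p::real \<times> real. vector [fst p, snd p] :: real^2) \<in> borel_measurable borel"
    unfolding vector_pair_eq by (intro borel_measurable_continuous_onI continuous_intros)
  show ?thesis
    using measurable_compose[OF pair vec] by (simp only: fst_conv snd_conv)
qed

lemma distr_lborel_vector_pair:
  "distr (lborel :: (real \<times> real) measure) borel (\<lambda>p. vector [fst p, snd p]) = (lborel :: (real^2) measure)"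
proof (rule lborel_eqI[symmetric])
  fix l u :: "real^2"
  assume le: "\<And>b. b \<in> Basis \<Longrightarrow> l \<bullet> b \<le> u \<bullet> b"
  have "l $ 1 \<le> u $ 1" "l $ 2 \<le> u $ 2"
    using le[of "axis 1 1"] le[of "axis 2 1"] by (auto simp: Basis_vec_def inner_axis)
  moreover have "(\<lambda>p. vector [fst p, snd p]) -` box l u = {l$1<..<u$1} \<times> {l$2<..<u$2}"
    by (auto simp: mem_box_cart forall_2)
  moreover have "(\<Prod>b\<in>Basis. (u - l) \<bullet> b) = (u$1 - l$1) * (u$2 - l$2)"
  proof -
    have basis: "(Basis :: (real^2) set) = {axis 1 1, axis 2 1}"
      by (auto simp: Basis_vec_def UNIV_2)
    have "axis 1 1 \<noteq> (axis 2 1 :: real^2)"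
      by (simp add: axis_eq_axis)
    then show ?thesis
      by (subst basis) (simp add: inner_axis)
  qed
  ultimately show "emeasure (distr lborel borel (\<lambda>p. vector [fst p, snd p])) (box l u) = (\<Prod>b\<in>Basis. (u - l) \<bullet> b)"
    by (simp add: emeasure_distr lborel_prod[symmetric] lborel.emeasure_pair_measure_Times
        ennreal_mult)
qed simp

lemma nn_integral_lborel_real2:
  fixes F :: "real^2 \<Rightarrow> ennreal"
  assumes [measurable]: "F \<in> borel_measurable borel"
  shows "(\<integral>\<^sup>+u. F u \<partial>lborel) = (\<integral>\<^sup>+y. (\<integral>\<^sup>+x. F (vector [x, y]) \<partial>lborel) \<partial>lborel)"
proof -
  have "(\<integral>\<^sup>+u. F u \<partial>lborel) = (\<integral>\<^sup>+p. F (vector [fst p, snd p]) \<partial>(lborel \<Otimes>\<^sub>M lborel))"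
    by (subst distr_lborel_vector_pair[symmetric], subst nn_integral_distr)
      (simp_all add: lborel_prod[symmetric])
  also have "\<dots> = (\<integral>\<^sup>+y. (\<integral>\<^sup>+x. F (vector [x, y]) \<partial>lborel) \<partial>lborel)"
    by (subst lborel_pair.nn_integral_snd[symmetric]) simp_all
  finally show ?thesis .
qed

text \<open>\<open>plane_dir\<close> maps \<open>\<real>\<close> onto the open upper unit half-circle; in the parameter \<open>t\<close> the arc-length
  element is \<open>dt / (1 + t^2)\<close>.\<close>

definition plane_dir :: "real \<Rightarrow> real^2" where
  "plane_dir t = (1 / sqrt (1 + t\<^sup>2)) *\<^sub>R vector [t, 1]"

lemma norm_plane_dir [simp]: "norm (plane_dir t) = 1"
proof -
  have "norm (vector [t, 1] :: real^2) = sqrt (1 + t\<^sup>2)"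
    by (simp add: norm_eq_sqrt_inner inner_vec_def sum_2 power2_eq_square)
  moreover have "0 < 1 + t\<^sup>2"
    by (simp add: add_pos_nonneg)
  ultimately show ?thesis
    by (simp add: plane_dir_def)
qed

lemma measurable_plane_dir [measurable]: "plane_dir \<in> borel_measurable borel"
  unfolding plane_dir_def by measurable

lemma nn_integral_Ioi_radial_rescale:
  fixes G :: "real \<Rightarrow> ennreal"
  assumes "c > 0" and [measurable]: "G \<in> borel_measurable borel"
  shows "(\<integral>\<^sup>+y\<in>{0<..}. ennreal y * G y \<partial>lborel)
       = ennreal (c\<^sup>2) * (\<integral>\<^sup>+r\<in>{0<..}. ennreal r * G (c * r) \<partial>lborel)"
proof -
  have "(\<integral>\<^sup>+y\<in>{0<..}. ennreal y * G y \<partial>lborel)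
      = ennreal c * (\<integral>\<^sup>+r. ennreal (c * r) * G (c * r) * indicator {0<..} (c * r) \<partial>lborel)"
    using nn_integral_real_affine[of "\<lambda>y. ennreal y * G y * indicator {0<..} y" c 0] assms
    by simp
  also have "\<dots> = ennreal c * (\<integral>\<^sup>+r. ennreal c * (ennreal r * G (c * r) * indicator {0<..} r) \<partial>lborel)"
  proof -
    have "ennreal (c * r) * G (c * r) * indicator {0<..} (c * r)
        = ennreal c * (ennreal r * G (c * r) * indicator {0<..} r)" for r
      using assms by (cases "r > 0") (auto simp: indicator_def zero_less_mult_iff ennreal_mult mult.assoc)
    then show ?thesis
      by simp
  qed
  also have "\<dots> = ennreal (c\<^sup>2) * (\<integral>\<^sup>+r\<in>{0<..}. ennreal r * G (c * r) \<partial>lborel)"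
    using assms by (simp add: nn_integral_cmult power2_eq_square ennreal_mult mult.assoc)
  finally show ?thesis .
qed

lemma nn_integral_upper_half_plane_polar:
  fixes F :: "real^2 \<Rightarrow> ennreal"
  assumes [measurable]: "F \<in> borel_measurable borel"
  shows "(\<integral>\<^sup>+y\<in>{0<..}. (\<integral>\<^sup>+x. F (vector [x, y]) \<partial>lborel) \<partial>lborel)
       = (\<integral>\<^sup>+t. ennreal (1 / (1 + t\<^sup>2)) * (\<integral>\<^sup>+r\<in>{0<..}. ennreal r * F (r *\<^sub>R plane_dir t) \<partial>lborel) \<partial>lborel)"
proof -
  have scale: "vector [y * t, y] = y *\<^sub>R (vector [t, 1] :: real^2)" for y t :: real
    by (simp add: vec_eq_iff forall_2)
  have "(\<integral>\<^sup>+y\<in>{0<..}. (\<integral>\<^sup>+x. F (vector [x, y]) \<partial>lborel) \<partial>lborel)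
      = (\<integral>\<^sup>+y. (\<integral>\<^sup>+t. ennreal y * F (y *\<^sub>R vector [t, 1]) * indicator {0<..} y \<partial>lborel) \<partial>lborel)"
  proof (rule nn_integral_cong)
    fix y :: real
    show "(\<integral>\<^sup>+x. F (vector [x, y]) \<partial>lborel) * indicator {0<..} y
        = (\<integral>\<^sup>+t. ennreal y * F (y *\<^sub>R vector [t, 1]) * indicator {0<..} y \<partial>lborel)"
    proof (cases "y > 0")
      case True
      then show ?thesis
        using nn_integral_real_affine[of "\<lambda>x. F (vector [x, y])" y 0]
        by (simp add: scale nn_integral_cmult)
    qed simp
  qed
  also have "\<dots> = (\<integral>\<^sup>+t. (\<integral>\<^sup>+y\<in>{0<..}. ennreal y * F (y *\<^sub>R vector [t, 1]) \<partial>lborel) \<partial>lborel)"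
    by (rule lborel_pair.Fubini') measurable
  also have "\<dots> = (\<integral>\<^sup>+t. ennreal (1 / (1 + t\<^sup>2)) * (\<integral>\<^sup>+r\<in>{0<..}. ennreal r * F (r *\<^sub>R plane_dir t) \<partial>lborel) \<partial>lborel)"
  proof (rule nn_integral_cong)
    fix t :: real
    have "0 < 1 + t\<^sup>2"
      by (simp add: add_pos_nonneg)
    then show "(\<integral>\<^sup>+y\<in>{0<..}. ennreal y * F (y *\<^sub>R vector [t, 1]) \<partial>lborel)
        = ennreal (1 / (1 + t\<^sup>2)) * (\<integral>\<^sup>+r\<in>{0<..}. ennreal r * F (r *\<^sub>R plane_dir t) \<partial>lborel)"
      using nn_integral_Ioi_radial_rescale[of "1 / sqrt (1 + t\<^sup>2)" "\<lambda>y. F (y *\<^sub>R vector [t, 1])"]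
      by (simp add: plane_dir_def power_divide)
  qed
  finally show ?thesis .
qed

lemma nn_integral_lborel_real2_upper_half:
  fixes F :: "real^2 \<Rightarrow> ennreal"
  assumes [measurable]: "F \<in> borel_measurable borel"
  shows "(\<integral>\<^sup>+u. F u \<partial>lborel)
       = (\<integral>\<^sup>+y\<in>{0<..}. (\<integral>\<^sup>+x. F (vector [x, y]) + F (- vector [x, y]) \<partial>lborel) \<partial>lborel)"
proof -
  define G where "G y = (\<integral>\<^sup>+x. F (vector [x, y]) \<partial>lborel)" for y
  have [measurable]: "G \<in> borel_measurable borel"
    unfolding G_def by measurable
  have reflect: "G (- y) = (\<integral>\<^sup>+x. F (- vector [x, y]) \<partial>lborel)" for y
  proof -
    have "vector [- x, - y] = - (vector [x, y] :: real^2)" for x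
      by (simp add: vec_eq_iff forall_2)
    then show ?thesis
      using nn_integral_real_affine[of "\<lambda>x. F (vector [x, - y])" "-1" 0]
      by (simp add: G_def)
  qed
  have "(\<integral>\<^sup>+u. F u \<partial>lborel) = (\<integral>\<^sup>+y. G y * indicator {0<..} y + G y * indicator {..<0} y \<partial>lborel)"
    unfolding G_def nn_integral_lborel_real2[OF assms]
    by (intro nn_integral_cong_AE eventually_mono[OF AE_lborel_singleton[of 0]])
      (auto simp: indicator_def)
  also have "\<dots> = (\<integral>\<^sup>+y\<in>{0<..}. G y \<partial>lborel) + (\<integral>\<^sup>+y\<in>{..<0}. G y \<partial>lborel)"
    by (rule nn_integral_add) measurable
  also have "(\<integral>\<^sup>+y\<in>{..<0}. G y \<partial>lborel) = (\<integral>\<^sup>+y\<in>{0<..}. G (- y) \<partial>lborel)"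
    using nn_integral_real_affine[of "\<lambda>y. G y * indicator {..<0} y" "-1" 0]
    by (simp add: indicator_def)
  also have "(\<integral>\<^sup>+y\<in>{0<..}. G y \<partial>lborel) + \<dots> = (\<integral>\<^sup>+y\<in>{0<..}. G y + G (- y) \<partial>lborel)"
    by (subst nn_integral_add[symmetric]) (simp_all add: distrib_right)
  also have "\<dots> = (\<integral>\<^sup>+y\<in>{0<..}. (\<integral>\<^sup>+x. F (vector [x, y]) + F (- vector [x, y]) \<partial>lborel) \<partial>lborel)"
    unfolding reflect unfolding G_def by (simp add: nn_integral_add)
  finally show ?thesis .
qed

lemma nn_integral_lborel_real2_polar:
  fixes F :: "real^2 \<Rightarrow> ennreal"
  assumes [measurable]: "F \<in> borel_measurable borel"
  shows "(\<integral>\<^sup>+u. F u \<partial>lborel) = (\<integral>\<^sup>+t. ennreal (1 / (1 + t\<^sup>2)) *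
     (\<integral>\<^sup>+r\<in>{0..}. ennreal r * (F (v + r *\<^sub>R plane_dir t) + F (v - r *\<^sub>R plane_dir t)) \<partial>lborel) \<partial>lborel)"
proof -
  have "(\<integral>\<^sup>+u. F u \<partial>lborel) = (\<integral>\<^sup>+u. F (v + u) \<partial>lborel)"
    by (subst lborel_affine[of 1 v]) (simp_all add: nn_integral_density nn_integral_distr)
  also have "\<dots> = (\<integral>\<^sup>+y\<in>{0<..}. (\<integral>\<^sup>+x. F (v + vector [x, y]) + F (v - vector [x, y]) \<partial>lborel) \<partial>lborel)"
    by (subst nn_integral_lborel_real2_upper_half) simp_all
  also have "\<dots> = (\<integral>\<^sup>+t. ennreal (1 / (1 + t\<^sup>2)) *
     (\<integral>\<^sup>+r\<in>{0<..}. ennreal r * (F (v + r *\<^sub>R plane_dir t) + F (v - r *\<^sub>R plane_dir t)) \<partial>lborel) \<partial>lborel)"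
    by (rule nn_integral_upper_half_plane_polar[where F = "\<lambda>u. F (v + u) + F (v - u)"]) measurable
  also have "\<dots> = (\<integral>\<^sup>+t. ennreal (1 / (1 + t\<^sup>2)) *
     (\<integral>\<^sup>+r\<in>{0..}. ennreal r * (F (v + r *\<^sub>R plane_dir t) + F (v - r *\<^sub>R plane_dir t)) \<partial>lborel) \<partial>lborel)"
  proof -
    have "ennreal r * X * indicator {0<..} r = ennreal r * X * indicator {0..} r" for r X
      by (cases "r = 0") (auto simp: indicator_def)
    then show ?thesis
      by simp
  qed
  finally show ?thesis .
qed

lemma nn_integral_inverse_1_plus_square: "(\<integral>\<^sup>+t. ennreal (1 / (1 + t\<^sup>2)) \<partial>lborel) = ennreal pi"
proof -
  let ?f = "\<lambda>t::real. ennreal (1 / (1 + t\<^sup>2))"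
  have half: "(\<integral>\<^sup>+t\<in>{0..}. ?f t \<partial>lborel) = ennreal (pi / 2 - arctan 0)"
  proof (rule nn_integral_FTC_atLeast)
    show "DERIV arctan x :> 1 / (1 + x\<^sup>2)" for x
      using DERIV_arctan[of x] by (simp add: divide_inverse)
    show "0 \<le> 1 / (1 + x\<^sup>2)" for x :: real
      by (simp add: add_pos_nonneg less_imp_le)
  qed (simp_all add: tendsto_arctan_at_top)
  have "(\<integral>\<^sup>+t. ?f t \<partial>lborel) = (\<integral>\<^sup>+t. ?f t * indicator {0..} t + ?f t * indicator {..<0} t \<partial>lborel)"
    by (intro nn_integral_cong) (simp add: indicator_def)
  also have "\<dots> = (\<integral>\<^sup>+t\<in>{0..}. ?f t \<partial>lborel) + (\<integral>\<^sup>+t\<in>{..<0}. ?f t \<partial>lborel)"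
    by (rule nn_integral_add) measurable
  also have "(\<integral>\<^sup>+t\<in>{..<0}. ?f t \<partial>lborel) = (\<integral>\<^sup>+t\<in>{0<..}. ?f t \<partial>lborel)"
    using nn_integral_real_affine[of "\<lambda>t. ?f t * indicator {..<0} t" "-1" 0]
    by (simp add: indicator_def)
  also have "\<dots> = (\<integral>\<^sup>+t\<in>{0..}. ?f t \<partial>lborel)"
    by (intro nn_integral_cong_AE eventually_mono[OF AE_lborel_singleton[of 0]])
      (simp add: indicator_def)
  finally show ?thesis
    using half by (simp flip: ennreal_plus)
qed

section \<open>Estimates on the half-line\<close>

lemma nn_integral_Ici_split:
  fixes f :: "real \<Rightarrow> ennreal"
  assumes [measurable]: "f \<in> borel_measurable borel" and "0 \<le> \<rho>"
  shows "(\<integral>\<^sup>+r\<in>{0..}. f r \<partial>lborel) = (\<integral>\<^sup>+r\<in>{0..\<rho>}. f r \<partial>lborel) + (\<integral>\<^sup>+r\<in>{\<rho>..}. f r \<partial>lborel)"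
proof -
  have "(\<integral>\<^sup>+r\<in>{0..}. f r \<partial>lborel) = (\<integral>\<^sup>+r. f r * indicator {0..\<rho>} r + f r * indicator {\<rho>..} r \<partial>lborel)"
    using \<open>0 \<le> \<rho>\<close>
    by (intro nn_integral_cong_AE eventually_mono[OF AE_lborel_singleton[of \<rho>]])
      (auto simp: indicator_def)
  also have "\<dots> = (\<integral>\<^sup>+r\<in>{0..\<rho>}. f r \<partial>lborel) + (\<integral>\<^sup>+r\<in>{\<rho>..}. f r \<partial>lborel)"
    by (rule nn_integral_add) measurable
  finally show ?thesis .
qed

lemma nn_integral_Icc_le_Ici_mono_weight:
  fixes p K :: "real \<Rightarrow> real"
  assumes [measurable]: "p \<in> borel_measurable borel" "K \<in> borel_measurable borel"
    and p_nonneg: "\<And>r. 0 \<le> r \<Longrightarrow> 0 \<le> p r" and K_nonneg: "\<And>r. 0 \<le> r \<Longrightarrow> 0 \<le> K r"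
    and K_mono: "mono_on {0..} K" and "0 \<le> \<rho>"
    and le: "(\<integral>\<^sup>+r\<in>{0..\<rho>}. ennreal (p r) \<partial>lborel) \<le> (\<integral>\<^sup>+r\<in>{\<rho>..}. ennreal (p r) \<partial>lborel)"
  shows "(\<integral>\<^sup>+r\<in>{0..\<rho>}. ennreal (p r * K r) \<partial>lborel) \<le> (\<integral>\<^sup>+r\<in>{\<rho>..}. ennreal (p r * K r) \<partial>lborel)"
proof -
  have below: "p r * K r \<le> K \<rho> * p r" if "r \<in> {0..\<rho>}" for r
    using that p_nonneg[of r] mono_onD[OF K_mono, of r \<rho>] \<open>0 \<le> \<rho>\<close>
    by (metis atLeastAtMost_iff atLeast_iff mult.commute mult_left_mono)
  have above: "K \<rho> * p r \<le> p r * K r" if "r \<in> {\<rho>..}" for r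
    using that p_nonneg[of r] mono_onD[OF K_mono, of \<rho> r] \<open>0 \<le> \<rho>\<close>
    by (metis atLeast_iff mult.commute mult_left_mono order_trans)
  have "(\<integral>\<^sup>+r\<in>{0..\<rho>}. ennreal (p r * K r) \<partial>lborel) \<le> (\<integral>\<^sup>+r\<in>{0..\<rho>}. ennreal (K \<rho>) * ennreal (p r) \<partial>lborel)"
    using below K_nonneg[OF \<open>0 \<le> \<rho>\<close>]
    by (intro nn_integral_mono) (simp add: indicator_def ennreal_mult'[symmetric] ennreal_leI)
  also have "\<dots> = ennreal (K \<rho>) * (\<integral>\<^sup>+r\<in>{0..\<rho>}. ennreal (p r) \<partial>lborel)"
    by (simp add: nn_integral_cmult mult.assoc)
  also have "\<dots> \<le> ennreal (K \<rho>) * (\<integral>\<^sup>+r\<in>{\<rho>..}. ennreal (p r) \<partial>lborel)"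
    using le by (rule mult_left_mono) simp
  also have "\<dots> = (\<integral>\<^sup>+r\<in>{\<rho>..}. ennreal (K \<rho>) * ennreal (p r) \<partial>lborel)"
    by (simp add: nn_integral_cmult mult.assoc)
  also have "\<dots> \<le> (\<integral>\<^sup>+r\<in>{\<rho>..}. ennreal (p r * K r) \<partial>lborel)"
    using above K_nonneg[OF \<open>0 \<le> \<rho>\<close>]
    by (intro nn_integral_mono) (simp add: indicator_def ennreal_mult'[symmetric] ennreal_leI)
  finally show ?thesis .
qed

lemma nn_integral_exp_quadratic_finite:
  fixes a b :: real
  assumes "0 < a"
  shows "(\<integral>\<^sup>+r. ennreal (exp (b * r - a * r\<^sup>2)) \<partial>lborel) < \<infinity>"
proof -
  define \<mu> \<sigma> where "\<mu> = b / (2 * a)" and "\<sigma> = 1 / sqrt (2 * a)"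
  define C where "C = exp (a * \<mu>\<^sup>2) * sqrt (2 * pi * \<sigma>\<^sup>2)"
  have "0 < \<sigma>" and \<sigma>_sq: "\<sigma>\<^sup>2 = 1 / (2 * a)"
    using assms by (simp_all add: \<sigma>_def power_divide)
  have "exp (b * r - a * r\<^sup>2) = C * normal_density \<mu> \<sigma> r" for r
  proof -
    have "b * r - a * r\<^sup>2 = a * \<mu>\<^sup>2 + - ((r - \<mu>)\<^sup>2) / (2 * \<sigma>\<^sup>2)"
      using assms unfolding \<sigma>_sq \<mu>_def by (simp add: field_simps power2_eq_square)
    then have "exp (b * r - a * r\<^sup>2) = exp (a * \<mu>\<^sup>2) * exp (- ((r - \<mu>)\<^sup>2) / (2 * \<sigma>\<^sup>2))"
      by (simp only: exp_add)
    then show ?thesis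
      using \<open>0 < \<sigma>\<close> by (simp add: C_def normal_density_def)
  qed
  then have "(\<integral>\<^sup>+r. ennreal (exp (b * r - a * r\<^sup>2)) \<partial>lborel)
      = ennreal C * (\<integral>\<^sup>+r. ennreal (normal_density \<mu> \<sigma> r) \<partial>lborel)"
    by (simp add: C_def ennreal_mult normal_density_nonneg nn_integral_cmult)
  also have "\<dots> < \<infinity>"
    using integrableD(2)[OF integrable_normal_density[of \<sigma> \<mu>]] \<open>0 < \<sigma>\<close>
    by (simp add: ennreal_mult_less_top less_top)
  finally show ?thesis .
qed

lemma cosh_le_exp_abs: "cosh x \<le> exp \<bar>x :: real\<bar>"
proof -
  have "2 * cosh x = exp \<bar>x\<bar> + exp (- \<bar>x\<bar>)"
    by (metis cosh_real_abs cosh_field_def nonzero_mult_div_cancel_left zero_neq_numeral times_divide_eq_right)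
  moreover have "exp (- \<bar>x\<bar>) \<le> exp \<bar>x\<bar>"
    by simp
  ultimately show ?thesis
    by linarith
qed

lemma measurable_cosh [measurable]: "(cosh :: real \<Rightarrow> real) \<in> borel_measurable borel"
  by (intro borel_measurable_continuous_onI continuous_intros)

lemma mono_on_scaled_cosh:
  assumes "0 \<le> C"
  shows "mono_on {0..} (\<lambda>r. C * cosh (b * r :: real))"
proof (rule mono_onI)
  fix r s :: real
  assume "r \<in> {0..}" "s \<in> {0..}" "r \<le> s"
  then have "cosh (\<bar>b\<bar> * r) \<le> cosh (\<bar>b\<bar> * s)"
    by (simp add: cosh_real_nonneg_le_iff mult_left_mono)
  moreover have "cosh (b * x) = cosh (\<bar>b\<bar> * x)" if "0 \<le> x" for x
    using that by (metis abs_mult abs_of_nonneg cosh_real_abs)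
  ultimately have "cosh (b * r) \<le> cosh (b * s)"
    using \<open>r \<in> {0..}\<close> \<open>s \<in> {0..}\<close> by (metis atLeast_iff)
  then show "C * cosh (b * r) \<le> C * cosh (b * s)"
    using assms by (rule mult_left_mono)
qed

section \<open>The error function\<close>

lemma has_real_derivative_erf: "(erf has_real_derivative 2 / sqrt pi * exp (- (x\<^sup>2))) (at x)"
proof -
  let ?a = "- \<bar>x\<bar> - 1" and ?b = "\<bar>x\<bar> + 1"
  have "((\<lambda>u. LBINT t=ereal 0..ereal u. exp (- (t\<^sup>2))) has_vector_derivative exp (- (x\<^sup>2))) (at x within {?a..?b})"
    by (rule interval_integral_FTC2) (auto intro!: continuous_intros)
  moreover have "at x within {?a..?b} = at x"
    by (rule at_within_Icc_at) auto
  ultimately have "((\<lambda>u. LBINT t=0..u. exp (- (t\<^sup>2))) has_real_derivative exp (- (x\<^sup>2))) (at x)"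
    by (simp add: has_real_derivative_iff_has_vector_derivative zero_ereal_def)
  then show ?thesis
    unfolding erf_def[abs_def] by (rule DERIV_cmult)
qed

lemma DERIV_erf [derivative_intros]:
  "(f has_real_derivative f') (at x within S) \<Longrightarrow>
    ((\<lambda>x. erf (f x)) has_real_derivative 2 / sqrt pi * exp (- ((f x)\<^sup>2)) * f') (at x within S)"
  by (rule DERIV_chain2[OF has_real_derivative_erf])

lemma continuous_erf: "isCont erf x"
  using has_real_derivative_erf by (rule DERIV_isCont)

lemma erf_0 [simp]: "erf 0 = 0"
  by (simp add: erf_def zero_ereal_def)

lemma strict_mono_erf: "strict_mono erf"
proof (rule strict_monoI)
  fix x y :: real
  assume "x < y"
  have "\<exists>d. (erf has_real_derivative d) (at t) \<and> 0 < d" for t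
    using has_real_derivative_erf by fastforce
  then show "erf x < erf y"
    using DERIV_pos_imp_increasing[OF \<open>x < y\<close>] by blast
qed

lemma erf_nonneg: "0 \<le> x \<Longrightarrow> 0 \<le> erf x"
  using strict_mono_less_eq[OF strict_mono_erf, of 0 x] by simp

lemma tendsto_erf_at_top: "(erf \<longlongrightarrow> 1) at_top"
proof -
  have gauss: "has_bochner_integral lborel (\<lambda>x. indicator {0..} x *\<^sub>R exp (- x\<^sup>2)) (sqrt pi / 2)"
    by (rule gaussian_moment_0)
  have "set_integrable lborel {0..} (\<lambda>x::real. exp (- (x^2)))"
    unfolding set_integrable_def using gauss by (simp add: has_bochner_integral_iff)
  then have "((\<lambda>b. set_lebesgue_integral lborel {0..b} (\<lambda>x::real. exp (- (x^2))))
      \<longlongrightarrow> set_lebesgue_integral lborel {0..} (\<lambda>x::real. exp (- (x^2)))) at_top"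
    by (rule tendsto_set_lebesgue_integral_at_top[rotated]) auto
  also have "set_lebesgue_integral lborel {0..} (\<lambda>x::real. exp (- (x^2))) = sqrt pi / 2"
    unfolding set_lebesgue_integral_def by (rule has_bochner_integral_integral_eq[OF gauss])
  finally have "((\<lambda>b. 2 / sqrt pi * set_lebesgue_integral lborel {0..b} (\<lambda>x::real. exp (- (x^2))))
      \<longlongrightarrow> 2 / sqrt pi * (sqrt pi / 2)) at_top"
    by (rule tendsto_mult_left)
  moreover have "\<forall>\<^sub>F b in at_top. 2 / sqrt pi * set_lebesgue_integral lborel {0..b} (\<lambda>x::real. exp (- (x^2))) = erf b"
    using eventually_ge_at_top[of 0]
    by eventually_elim (simp add: erf_def interval_integral_Icc zero_ereal_def)
  ultimately show ?thesis
    by (simp add: tendsto_cong)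
qed

lemma erf_less_1: "erf x < 1"
proof -
  have "\<forall>\<^sub>F b in at_top. erf (x + 1) \<le> erf b"
    using eventually_ge_at_top[of "x + 1"]
    by eventually_elim (simp add: strict_mono_less_eq[OF strict_mono_erf])
  then have "erf (x + 1) \<le> 1"
    using tendsto_erf_at_top by (intro tendsto_lowerbound) auto
  then show ?thesis
    using strict_monoD[OF strict_mono_erf, of x "x + 1"] by simp
qed

lemma erf_diff_le:
  assumes "x \<le> y"
  shows "erf y - erf x \<le> 2 / sqrt pi * (y - x)"
proof -
  have "2 / sqrt pi * x - erf x \<le> 2 / sqrt pi * y - erf y"
  proof (rule DERIV_nonneg_imp_increasing_open[OF assms])
    fix t
    have "((\<lambda>t. 2 / sqrt pi * t - erf t) has_real_derivative 2 / sqrt pi - 2 / sqrt pi * exp (- t\<^sup>2)) (at t)"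
      by (rule DERIV_diff[OF DERIV_cmult_Id has_real_derivative_erf])
    moreover have "2 / sqrt pi * exp (- t\<^sup>2) \<le> 2 / sqrt pi"
      using mult_left_mono[of "exp (- t\<^sup>2)" 1 "2 / sqrt pi"] by simp
    ultimately show "\<exists>d. ((\<lambda>t. 2 / sqrt pi * t - erf t) has_real_derivative d) (at t) \<and> 0 \<le> d"
      by fastforce
  next
    show "continuous_on {x..y} (\<lambda>t. 2 / sqrt pi * t - erf t)"
      using continuous_erf by (intro continuous_intros continuous_at_imp_continuous_on) auto
  qed
  then show ?thesis
    unfolding right_diff_distrib by linarith
qed

lemma erf_erf_inv:
  assumes "0 \<le> y" and "y < 1"
  shows "erf (erf_inv y) = y"
proof -
  obtain N where "\<And>b. N \<le> b \<Longrightarrow> y < erf b"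
    using order_tendstoD(1)[OF tendsto_erf_at_top \<open>y < 1\<close>] unfolding eventually_at_top_linorder by blast
  then have "y < erf (max N 0)" "0 \<le> max N 0"
    by simp_all
  then obtain x where "erf x = y"
    using IVT[of erf 0 y "max N 0"] assms(1) continuous_erf by auto
  moreover have "x' = x" if "erf x' = y" for x'
    using strict_mono_eq[OF strict_mono_erf] that \<open>erf x = y\<close> by metis
  ultimately have "erf_inv y = x"
    unfolding erf_inv_def by (rule the_equality)
  with \<open>erf x = y\<close> show ?thesis
    by simp
qed

section \<open>The Maxwellian kernel in polar coordinates around \<open>v\<close>\<close>

text \<open>\<open>maxwell_kernel c a \<xi> v w\<close> is \<open>M\<^sub>1(w) / sqrt(|v - w|^2 + \<xi>^2)\<close> with \<open>a = m\<^sub>1 / (2 \<Theta>\<^sub>1)\<close>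
  and \<open>c\<close> the normalising constant of \<open>M\<^sub>1\<close>; \<open>ray_density a \<xi>\<close> is its radial profile around \<open>v\<close>.\<close>

definition maxwell_kernel :: "real \<Rightarrow> real \<Rightarrow> real \<Rightarrow> real^2 \<Rightarrow> real^2 \<Rightarrow> real" where
  "maxwell_kernel c a \<xi> v w = c * exp (- (a * (norm w)\<^sup>2)) / sqrt ((norm (v - w))\<^sup>2 + \<xi>\<^sup>2)"

definition ray_density :: "real \<Rightarrow> real \<Rightarrow> real \<Rightarrow> real" where
  "ray_density a \<xi> r = r * exp (- (a * r\<^sup>2)) / sqrt (r\<^sup>2 + \<xi>\<^sup>2)"

lemma measurable_ray_density [measurable]: "ray_density a \<xi> \<in> borel_measurable borel"
  unfolding ray_density_def by measurable

lemma measurable_maxwell_kernel [measurable]: "maxwell_kernel c a \<xi> v \<in> borel_measurable borel"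
  unfolding maxwell_kernel_def by measurable

lemma ray_density_nonneg: "0 \<le> r \<Longrightarrow> 0 \<le> ray_density a \<xi> r"
  by (simp add: ray_density_def)

lemma ray_density_le_exp:
  assumes "0 \<le> r"
  shows "ray_density a \<xi> r \<le> exp (- (a * r\<^sup>2))"
proof -
  have "r \<le> sqrt (r\<^sup>2 + \<xi>\<^sup>2)"
    using assms real_sqrt_le_mono[of "r\<^sup>2" "r\<^sup>2 + \<xi>\<^sup>2"] by simp
  then have "r / sqrt (r\<^sup>2 + \<xi>\<^sup>2) \<le> 1"
    by (metis divide_le_eq_1 less_eq_real_def real_sqrt_ge_zero zero_le_power2 add_nonneg_nonneg)
  then show ?thesis
    using mult_right_mono[of "r / sqrt (r\<^sup>2 + \<xi>\<^sup>2)" 1 "exp (- (a * r\<^sup>2))"]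
    by (simp add: ray_density_def)
qed

lemma maxwell_kernel_nonneg: "0 \<le> c \<Longrightarrow> 0 \<le> maxwell_kernel c a \<xi> v w"
  by (simp add: maxwell_kernel_def)

lemma maxwell_kernel_on_line:
  fixes v E :: "real^2"
  assumes "norm E = 1" and "0 \<le> r"
  shows "r * (maxwell_kernel c a \<xi> v (v + r *\<^sub>R E) + maxwell_kernel c a \<xi> v (v - r *\<^sub>R E))
       = ray_density a \<xi> r * (2 * c * exp (- (a * (norm v)\<^sup>2)) * cosh (2 * a * (v \<bullet> E) * r))"
proof -
  have "E \<bullet> E = 1"
    using assms(1) by (simp add: power2_norm_eq_inner[symmetric])
  then have sq: "(norm (v + r *\<^sub>R E))\<^sup>2 = (norm v)\<^sup>2 + 2 * r * (v \<bullet> E) + r\<^sup>2"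
    "(norm (v - r *\<^sub>R E))\<^sup>2 = (norm v)\<^sup>2 - 2 * r * (v \<bullet> E) + r\<^sup>2"
    unfolding power2_norm_eq_inner by (simp_all add: inner_commute algebra_simps power2_eq_square)
  have "exp (- (a * (norm (v + r *\<^sub>R E))\<^sup>2))
      = exp (- (a * (norm v)\<^sup>2)) * exp (- (a * r\<^sup>2)) * exp (- (2 * a * (v \<bullet> E) * r))"
    "exp (- (a * (norm (v - r *\<^sub>R E))\<^sup>2))
      = exp (- (a * (norm v)\<^sup>2)) * exp (- (a * r\<^sup>2)) * exp (2 * a * (v \<bullet> E) * r)"
    unfolding sq by (simp_all add: exp_add[symmetric] algebra_simps)
  moreover have "norm (v - (v + r *\<^sub>R E)) = r" "norm (v - (v - r *\<^sub>R E)) = r"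
    using assms by simp_all
  ultimately show ?thesis
    by (simp add: maxwell_kernel_def ray_density_def cosh_field_def algebra_simps add_divide_distrib)
qed

lemma nn_integral_maxwell_kernel_polar:
  fixes v :: "real^2" and R :: "real set"
  assumes "0 \<le> c" and [measurable]: "R \<in> sets borel"
  shows "(\<integral>\<^sup>+w. ennreal (maxwell_kernel c a \<xi> v w) * indicator {w. norm (w - v) \<in> R} w \<partial>lborel)
       = (\<integral>\<^sup>+t. ennreal (1 / (1 + t\<^sup>2)) * (\<integral>\<^sup>+r\<in>{0..} \<inter> R. ennreal (ray_density a \<xi> r *
            (2 * c * exp (- (a * (norm v)\<^sup>2)) * cosh (2 * a * (v \<bullet> plane_dir t) * r))) \<partial>lborel) \<partial>lborel)"
proof -
  let ?k = "\<lambda>w. ennreal (maxwell_kernel c a \<xi> v w) * indicator {w. norm (w - v) \<in> R} w"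
  have on_line: "ennreal r * (?k (v + r *\<^sub>R E) + ?k (v - r *\<^sub>R E)) * indicator {0..} r
      = ennreal (ray_density a \<xi> r * (2 * c * exp (- (a * (norm v)\<^sup>2)) * cosh (2 * a * (v \<bullet> E) * r)))
        * indicator ({0..} \<inter> R) r" if "norm E = 1" for r and E :: "real^2"
  proof (cases "0 \<le> r")
    case True
    then have "ennreal r * (?k (v + r *\<^sub>R E) + ?k (v - r *\<^sub>R E))
        = ennreal (r * (maxwell_kernel c a \<xi> v (v + r *\<^sub>R E) + maxwell_kernel c a \<xi> v (v - r *\<^sub>R E)))
          * indicator R r"
      using that \<open>0 \<le> c\<close>
      by (simp add: indicator_def maxwell_kernel_nonneg ennreal_mult ennreal_plus[symmetric] del: ennreal_plus)
    then show ?thesis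
      using True by (simp add: maxwell_kernel_on_line[OF that True] indicator_def)
  qed simp
  show ?thesis
    by (subst nn_integral_lborel_real2_polar[where v = v]) (simp_all add: on_line)
qed

lemma ray_density_cosh_le:
  fixes v E :: "real^2"
  assumes "0 \<le> a" and "0 \<le> C" and "0 \<le> r" and "norm E = 1"
  shows "ray_density a \<xi> r * (C * cosh (2 * a * (v \<bullet> E) * r)) \<le> C * exp (2 * a * norm v * r - a * r\<^sup>2)"
proof -
  have "\<bar>2 * a * (v \<bullet> E) * r\<bar> \<le> 2 * a * norm v * r"
    using assms Cauchy_Schwarz_ineq2[of v E] by (simp add: abs_mult mult_left_mono mult_right_mono)
  then have "ray_density a \<xi> r * (C * cosh (2 * a * (v \<bullet> E) * r)) \<le> exp (- (a * r\<^sup>2)) * (C * exp (2 * a * norm v * r))"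
    using assms ray_density_le_exp[of r a \<xi>] ray_density_nonneg[of r a \<xi>]
      cosh_le_exp_abs[of "2 * a * (v \<bullet> E) * r"]
    by (intro mult_mono mult_left_mono) (auto intro: order_trans)
  then show ?thesis
    by (simp add: exp_diff exp_minus field_simps)
qed

lemma nn_integral_maxwell_kernel_finite:
  fixes v :: "real^2"
  assumes "0 < a" and "0 \<le> c"
  shows "(\<integral>\<^sup>+w. ennreal (maxwell_kernel c a \<xi> v w) \<partial>lborel) < \<infinity>"
proof -
  define C where "C = 2 * c * exp (- (a * (norm v)\<^sup>2))"
  define Q where "Q = (\<integral>\<^sup>+r. ennreal (C * exp (2 * a * norm v * r - a * r\<^sup>2)) \<partial>lborel)"
  have "0 \<le> C"
    using assms by (simp add: C_def)
  have ray_bound: "(\<integral>\<^sup>+r\<in>{0..}. ennreal (ray_density a \<xi> r * (C * cosh (2 * a * (v \<bullet> plane_dir t) * r))) \<partial>lborel) \<le> Q" for t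
    unfolding Q_def using \<open>0 < a\<close> \<open>0 \<le> C\<close>
    by (intro nn_integral_mono) (simp add: indicator_def ray_density_cosh_le ennreal_leI)
  have "Q = ennreal C * (\<integral>\<^sup>+r. ennreal (exp (2 * a * norm v * r - a * r\<^sup>2)) \<partial>lborel)"
    unfolding Q_def using \<open>0 \<le> C\<close> by (simp add: ennreal_mult nn_integral_cmult)
  then have "Q < \<infinity>"
    using nn_integral_exp_quadratic_finite[OF \<open>0 < a\<close>] by (simp add: ennreal_mult_less_top)
  have "(\<integral>\<^sup>+w. ennreal (maxwell_kernel c a \<xi> v w) \<partial>lborel)
      = (\<integral>\<^sup>+t. ennreal (1 / (1 + t\<^sup>2)) * (\<integral>\<^sup>+r\<in>{0..}. ennreal (ray_density a \<xi> r *
            (C * cosh (2 * a * (v \<bullet> plane_dir t) * r))) \<partial>lborel) \<partial>lborel)"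
    using nn_integral_maxwell_kernel_polar[OF \<open>0 \<le> c\<close>, of UNIV a \<xi> v] by (simp add: C_def)
  also have "\<dots> \<le> (\<integral>\<^sup>+t. ennreal (1 / (1 + t\<^sup>2)) * Q \<partial>lborel)"
    by (intro nn_integral_mono mult_left_mono ray_bound) simp
  also have "\<dots> = ennreal pi * Q"
    by (simp add: nn_integral_multc nn_integral_inverse_1_plus_square)
  also have "\<dots> < \<infinity>"
    using \<open>Q < \<infinity>\<close> by (simp add: ennreal_mult_less_top)
  finally show ?thesis .
qed

lemma nn_integral_maxwell_kernel_ball_le_half:
  fixes v :: "real^2"
  assumes "0 \<le> c" and "0 \<le> \<rho>"
    and ray: "(\<integral>\<^sup>+r\<in>{0..\<rho>}. ennreal (ray_density a \<xi> r) \<partial>lborel)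
            \<le> (\<integral>\<^sup>+r\<in>{\<rho>..}. ennreal (ray_density a \<xi> r) \<partial>lborel)"
  shows "2 * (\<integral>\<^sup>+w. ennreal (maxwell_kernel c a \<xi> v w) * indicator {w. norm (w - v) \<le> \<rho>} w \<partial>lborel)
       \<le> (\<integral>\<^sup>+w. ennreal (maxwell_kernel c a \<xi> v w) \<partial>lborel)"
proof -
  define K where "K t r = 2 * c * exp (- (a * (norm v)\<^sup>2)) * cosh (2 * a * (v \<bullet> plane_dir t) * r)" for t r
  define J where "J A t = (\<integral>\<^sup>+r\<in>A. ennreal (ray_density a \<xi> r * K t r) \<partial>lborel)" for A t
  have J_le: "2 * J {0..\<rho>} t \<le> J {0..} t" for t
  proof -
    have "J {0..\<rho>} t \<le> J {\<rho>..} t"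
      unfolding J_def K_def using \<open>0 \<le> c\<close> \<open>0 \<le> \<rho>\<close> ray
      by (intro nn_integral_Icc_le_Ici_mono_weight mono_on_scaled_cosh) (auto simp: ray_density_nonneg)
    moreover have "J {0..} t = J {0..\<rho>} t + J {\<rho>..} t"
      unfolding J_def by (rule nn_integral_Ici_split[OF _ \<open>0 \<le> \<rho>\<close>]) (unfold K_def, measurable)
    ultimately show ?thesis
      by (simp add: mult_2 add_left_mono)
  qed
  have "(\<integral>\<^sup>+w. ennreal (maxwell_kernel c a \<xi> v w) * indicator {w. norm (w - v) \<le> \<rho>} w \<partial>lborel)
      = (\<integral>\<^sup>+t. ennreal (1 / (1 + t\<^sup>2)) * J {0..\<rho>} t \<partial>lborel)"
    using nn_integral_maxwell_kernel_polar[OF \<open>0 \<le> c\<close>, of "{..\<rho>}" a \<xi> v]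
    by (simp add: J_def K_def atLeastAtMost_def)
  also have "2 * \<dots> = (\<integral>\<^sup>+t. ennreal (1 / (1 + t\<^sup>2)) * (2 * J {0..\<rho>} t) \<partial>lborel)"
    by (subst nn_integral_cmult[symmetric]) (simp_all add: J_def K_def mult.left_commute)
  also have "\<dots> \<le> (\<integral>\<^sup>+t. ennreal (1 / (1 + t\<^sup>2)) * J {0..} t \<partial>lborel)"
    by (intro nn_integral_mono mult_left_mono J_le) simp
  also have "\<dots> = (\<integral>\<^sup>+w. ennreal (maxwell_kernel c a \<xi> v w) \<partial>lborel)"
    using nn_integral_maxwell_kernel_polar[OF \<open>0 \<le> c\<close>, of UNIV a \<xi> v]
    by (simp add: J_def K_def)
  finally show ?thesis .
qed

lemma maxwell_kernel_ball_le_half: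
  fixes v :: "real^2"
  assumes "0 < a" and "0 \<le> c" and "0 \<le> \<rho>"
    and "(\<integral>\<^sup>+r\<in>{0..\<rho>}. ennreal (ray_density a \<xi> r) \<partial>lborel)
            \<le> (\<integral>\<^sup>+r\<in>{\<rho>..}. ennreal (ray_density a \<xi> r) \<partial>lborel)"
  shows "(LINT w:{w. norm (w - v) \<le> \<rho>}|lborel. maxwell_kernel c a \<xi> v w)
       \<le> 1/2 * (LINT w|lborel. maxwell_kernel c a \<xi> v w)"
proof -
  let ?k = "maxwell_kernel c a \<xi> v" and ?B = "{w. norm (w - v) \<le> \<rho>}"
  let ?IA = "\<integral>\<^sup>+w. ennreal (?k w) \<partial>lborel" and ?IB = "\<integral>\<^sup>+w. ennreal (?k w) * indicator ?B w \<partial>lborel"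
  have "2 * enn2real ?IB \<le> enn2real ?IA"
    using nn_integral_maxwell_kernel_ball_le_half[OF assms(2-4)] enn2real_mono
      nn_integral_maxwell_kernel_finite[OF assms(1,2)]
    by (fastforce simp: enn2real_mult)
  moreover have "(LINT w:?B|lborel. ?k w) = enn2real ?IB"
  proof -
    have "ennreal (indicator ?B w *\<^sub>R ?k w) = ennreal (?k w) * indicator ?B w" for w
      by (simp add: indicator_def)
    then show ?thesis
      unfolding set_lebesgue_integral_def using \<open>0 \<le> c\<close>
      by (subst integral_eq_nn_integral) (auto simp: maxwell_kernel_nonneg)
  qed
  moreover have "(LINT w|lborel. ?k w) = enn2real ?IA"
    using \<open>0 \<le> c\<close> by (intro integral_eq_nn_integral) (auto simp: maxwell_kernel_nonneg)
  ultimately show ?thesis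
    by simp
qed

section \<open>The radial profile\<close>

lemma ray_density_antiderivative:
  assumes "0 < a" and "0 < r"
  shows "((\<lambda>r. sqrt pi / (2 * sqrt a) * exp (a * \<xi>\<^sup>2) * erf (sqrt a * sqrt (r\<^sup>2 + \<xi>\<^sup>2)))
          has_real_derivative ray_density a \<xi> r) (at r)"
proof -
  let ?s = "sqrt (r\<^sup>2 + \<xi>\<^sup>2)"
  have "0 < r\<^sup>2 + \<xi>\<^sup>2"
    using assms by (simp add: add_pos_nonneg)
  then have "((\<lambda>r. sqrt (r\<^sup>2 + \<xi>\<^sup>2)) has_real_derivative r / ?s) (at r)"
    by (auto intro!: derivative_eq_intros simp: field_simps)
  then have "((\<lambda>r. sqrt pi / (2 * sqrt a) * exp (a * \<xi>\<^sup>2) * erf (sqrt a * sqrt (r\<^sup>2 + \<xi>\<^sup>2)))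
      has_real_derivative sqrt pi / (2 * sqrt a) * exp (a * \<xi>\<^sup>2) *
        (2 / sqrt pi * exp (- (sqrt a * ?s)\<^sup>2) * (sqrt a * (r / ?s)))) (at r)"
    by (intro DERIV_cmult DERIV_erf)
  moreover have "exp (a * \<xi>\<^sup>2) * exp (- (sqrt a * ?s)\<^sup>2) = exp (- (a * r\<^sup>2))"
    using assms \<open>0 < r\<^sup>2 + \<xi>\<^sup>2\<close> by (simp add: power_mult_distrib exp_add[symmetric] algebra_simps)
  ultimately show ?thesis
    using assms by (simp add: ray_density_def field_simps)
qed

lemma nn_integral_ray_density_Icc:
  assumes "0 < a" and "0 \<le> \<xi>" and "0 \<le> \<rho>"
  shows "(\<integral>\<^sup>+r\<in>{0..\<rho>}. ennreal (ray_density a \<xi> r) \<partial>lborel)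
       = ennreal (sqrt pi / (2 * sqrt a) * exp (a * \<xi>\<^sup>2) *
           (erf (sqrt a * sqrt (\<rho>\<^sup>2 + \<xi>\<^sup>2)) - erf (sqrt a * \<xi>)))"
proof -
  define P where "P = (\<lambda>r. sqrt pi / (2 * sqrt a) * exp (a * \<xi>\<^sup>2) * erf (sqrt a * sqrt (r\<^sup>2 + \<xi>\<^sup>2)))"
  \<comment> \<open>For \<open>\<xi> = 0\<close> the primitive is not differentiable at \<open>0\<close>, hence the interior version of the FTC.\<close>
  have "(ray_density a \<xi> has_integral P \<rho> - P 0) {0..\<rho>}"
  proof (rule fundamental_theorem_of_calculus_interior[OF \<open>0 \<le> \<rho>\<close>])
    show "continuous_on {0..\<rho>} P"
      unfolding P_def using continuous_erf
      by (intro continuous_intros continuous_on_compose2[OF continuous_at_imp_continuous_on, of UNIV erf]) auto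
    show "(P has_vector_derivative ray_density a \<xi> r) (at r)" if "r \<in> {0<..<\<rho>}" for r
      using ray_density_antiderivative[OF \<open>0 < a\<close>, of r \<xi>] that
      by (simp add: P_def has_real_derivative_iff_has_vector_derivative)
  qed
  then have "(\<integral>\<^sup>+r\<in>{0..\<rho>}. ennreal (ray_density a \<xi> r) \<partial>lborel) = ennreal (P \<rho> - P 0)"
    by (rule nn_integral_has_integral_lebesgue'[rotated]) (simp add: ray_density_nonneg)
  then show ?thesis
    using \<open>0 \<le> \<xi>\<close> by (simp add: P_def right_diff_distrib)
qed

lemma nn_integral_ray_density_Ici:
  assumes "0 < a" and "0 < \<rho>"
  shows "(\<integral>\<^sup>+r\<in>{\<rho>..}. ennreal (ray_density a \<xi> r) \<partial>lborel)
       = ennreal (sqrt pi / (2 * sqrt a) * exp (a * \<xi>\<^sup>2) * (1 - erf (sqrt a * sqrt (\<rho>\<^sup>2 + \<xi>\<^sup>2))))"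
proof -
  define C where "C = sqrt pi / (2 * sqrt a) * exp (a * \<xi>\<^sup>2)"
  have "filterlim (\<lambda>r. sqrt (r\<^sup>2 + \<xi>\<^sup>2)) at_top at_top"
  proof (rule filterlim_at_top_mono[OF filterlim_ident])
    show "\<forall>\<^sub>F r in at_top. r \<le> sqrt (r\<^sup>2 + \<xi>\<^sup>2)"
      using eventually_ge_at_top[of 0]
      by eventually_elim (use real_sqrt_le_mono[of "_\<^sup>2" "_\<^sup>2 + \<xi>\<^sup>2"] in fastforce)
  qed
  then have "filterlim (\<lambda>r. sqrt a * sqrt (r\<^sup>2 + \<xi>\<^sup>2)) at_top at_top"
    using \<open>0 < a\<close> by (intro filterlim_tendsto_pos_mult_at_top[OF tendsto_const]) auto
  then have lim: "((\<lambda>r. C * erf (sqrt a * sqrt (r\<^sup>2 + \<xi>\<^sup>2))) \<longlongrightarrow> C * 1) at_top"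
    by (intro tendsto_mult_left filterlim_compose[OF tendsto_erf_at_top])
  have "(\<integral>\<^sup>+r\<in>{\<rho>..}. ennreal (ray_density a \<xi> r) \<partial>lborel) = ennreal (C * 1 - C * erf (sqrt a * sqrt (\<rho>\<^sup>2 + \<xi>\<^sup>2)))"
  proof (rule nn_integral_FTC_atLeast[OF measurable_ray_density _ _ lim])
    show "((\<lambda>r. C * erf (sqrt a * sqrt (r\<^sup>2 + \<xi>\<^sup>2))) has_real_derivative ray_density a \<xi> r) (at r)"
      if "\<rho> \<le> r" for r
      using ray_density_antiderivative[OF \<open>0 < a\<close>, of r \<xi>] that \<open>0 < \<rho>\<close> by (simp add: C_def)
    show "0 \<le> ray_density a \<xi> r" if "\<rho> \<le> r" for r
      using that \<open>0 < \<rho>\<close> by (simp add: ray_density_nonneg)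
  qed
  then show ?thesis
    by (simp add: C_def right_diff_distrib)
qed

lemma ray_density_half:
  assumes "0 < a" and "0 \<le> \<xi>" and "0 < \<rho>"
    and "2 * erf (sqrt a * sqrt (\<rho>\<^sup>2 + \<xi>\<^sup>2)) \<le> 1 + erf (sqrt a * \<xi>)"
  shows "(\<integral>\<^sup>+r\<in>{0..\<rho>}. ennreal (ray_density a \<xi> r) \<partial>lborel)
       \<le> (\<integral>\<^sup>+r\<in>{\<rho>..}. ennreal (ray_density a \<xi> r) \<partial>lborel)"
  unfolding nn_integral_ray_density_Icc[OF assms(1,2) less_imp_le[OF assms(3)]]
    nn_integral_ray_density_Ici[OF assms(1,3)]
  using assms by (intro ennreal_leI mult_left_mono) auto

lemma exists_half_radius:
  fixes a X :: real
  assumes "0 < a" and "0 < X"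
  defines "\<eta> \<equiv> erf_inv (1/2) / sqrt a"
  shows "\<exists>\<rho>>0. (\<forall>\<xi>. 0 \<le> \<xi> \<and> \<xi> \<le> X \<longrightarrow> 2 * erf (sqrt a * sqrt (\<rho>\<^sup>2 + \<xi>\<^sup>2)) \<le> 1 + erf (sqrt a * \<xi>))
           \<and> (X < \<eta> \<longrightarrow> sqrt (\<eta>\<^sup>2 - X\<^sup>2) \<le> \<rho>)"
proof (cases "X < \<eta>")
  case True
  define \<rho> where "\<rho> = sqrt (\<eta>\<^sup>2 - X\<^sup>2)"
  have "X\<^sup>2 < \<eta>\<^sup>2"
    using True \<open>0 < X\<close> by (simp add: power_strict_mono)
  then have "0 < \<rho>"
    by (simp add: \<rho>_def)
  moreover have "2 * erf (sqrt a * sqrt (\<rho>\<^sup>2 + \<xi>\<^sup>2)) \<le> 1 + erf (sqrt a * \<xi>)" if "0 \<le> \<xi>" "\<xi> \<le> X" for \<xi>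
  proof -
    have "\<rho>\<^sup>2 + \<xi>\<^sup>2 \<le> \<eta>\<^sup>2"
      using \<open>X\<^sup>2 < \<eta>\<^sup>2\<close> that power_mono[of \<xi> X 2] by (simp add: \<rho>_def)
    then have "sqrt (\<rho>\<^sup>2 + \<xi>\<^sup>2) \<le> \<eta>"
      using True \<open>0 < X\<close> real_sqrt_le_mono by fastforce
    then have "erf (sqrt a * sqrt (\<rho>\<^sup>2 + \<xi>\<^sup>2)) \<le> erf (sqrt a * \<eta>)"
      using \<open>0 < a\<close> by (simp add: strict_mono_less_eq[OF strict_mono_erf])
    also have "erf (sqrt a * \<eta>) = 1/2"
      using \<open>0 < a\<close> erf_erf_inv[of "1/2"] by (simp add: \<eta>_def)
    moreover have "0 \<le> erf (sqrt a * \<xi>)"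
      using \<open>0 < a\<close> \<open>0 \<le> \<xi>\<close> by (simp add: erf_nonneg)
    ultimately show ?thesis
      by linarith
  qed
  ultimately show ?thesis
    unfolding \<rho>_def by blast
next
  case False
  define \<rho> where "\<rho> = sqrt pi * (1 - erf (sqrt a * X)) / (4 * sqrt a)"
  have "0 < \<rho>"
    using erf_less_1 \<open>0 < a\<close> by (simp add: \<rho>_def)
  moreover have "2 * erf (sqrt a * sqrt (\<rho>\<^sup>2 + \<xi>\<^sup>2)) \<le> 1 + erf (sqrt a * \<xi>)" if "0 \<le> \<xi>" "\<xi> \<le> X" for \<xi>
  proof -
    let ?s = "sqrt (\<rho>\<^sup>2 + \<xi>\<^sup>2)"
    have "\<xi> \<le> ?s"
      using real_sqrt_le_mono[of "\<xi>\<^sup>2" "\<rho>\<^sup>2 + \<xi>\<^sup>2"] \<open>0 \<le> \<xi>\<close> by simp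
    have "?s \<le> \<rho> + \<xi>"
      using \<open>0 < \<rho>\<close> \<open>0 \<le> \<xi>\<close> by (simp add: sqrt_sum_squares_le_sum)
    have "erf (sqrt a * ?s) - erf (sqrt a * \<xi>) \<le> 2 / sqrt pi * (sqrt a * ?s - sqrt a * \<xi>)"
      using \<open>\<xi> \<le> ?s\<close> \<open>0 < a\<close> by (intro erf_diff_le mult_left_mono) auto
    also have "\<dots> \<le> 2 / sqrt pi * (sqrt a * \<rho>)"
      using mult_left_mono[OF \<open>?s \<le> \<rho> + \<xi>\<close>, of "sqrt a"] \<open>0 < a\<close>
      by (intro mult_left_mono) (auto simp: algebra_simps)
    also have "\<dots> = (1 - erf (sqrt a * X)) / 2"
      using \<open>0 < a\<close> by (simp add: \<rho>_def)
    finally show ?thesis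
      using strict_mono_less_eq[OF strict_mono_erf, of "sqrt a * \<xi>" "sqrt a * X"] \<open>0 < a\<close> \<open>\<xi> \<le> X\<close>
      by (simp add: mult_left_mono)
  qed
  ultimately show ?thesis
    using False by blast
qed

theorem lemmaA1:
  fixes m\<^sub>1 \<Theta>\<^sub>1 \<kappa> \<rho>\<^sub>0 :: real
  assumes "m\<^sub>1 > 0" and "\<Theta>\<^sub>1 > 0" and "\<kappa> > 0" and "\<rho>\<^sub>0 > 0"
  shows "\<exists>\<rho>\<^sub>1 > 0.
     (\<forall>(v::real^2) \<xi>. 0 \<le> \<xi> \<and> \<xi> \<le> \<rho>\<^sub>0 / (2 * \<kappa>) \<longrightarrow>
        (LINT w:{w. norm (w - v) \<le> \<rho>\<^sub>1}|lborel. M1 m\<^sub>1 \<Theta>\<^sub>1 w / sqrt ((norm (v - w))^2 + \<xi>^2))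
        \<le> 1/2 * (LINT w|lborel. M1 m\<^sub>1 \<Theta>\<^sub>1 w / sqrt ((norm (v - w))^2 + \<xi>^2)))
   \<and> (let \<eta> = sqrt (2 * \<Theta>\<^sub>1 / m\<^sub>1) * erf_inv (1/2) in
        \<rho>\<^sub>0 < 2 * \<kappa> * \<eta> \<longrightarrow> \<rho>\<^sub>1 \<ge> sqrt (\<eta>^2 - \<rho>\<^sub>0^2 / (4 * \<kappa>^2)))"
proof -
  define a c X where "a = m\<^sub>1 / (2 * \<Theta>\<^sub>1)" and "c = (m\<^sub>1 / (2 * pi * \<Theta>\<^sub>1)) powr (3/2)"
    and "X = \<rho>\<^sub>0 / (2 * \<kappa>)"
  have "0 < a" "0 < X"
    using assms by (simp_all add: a_def X_def)
  have M1_kernel: "M1 m\<^sub>1 \<Theta>\<^sub>1 w / sqrt ((norm (v - w))\<^sup>2 + \<xi>\<^sup>2) = maxwell_kernel c a \<xi> v w" for v w \<xi>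
    by (simp add: M1_def maxwell_kernel_def a_def c_def)
  have \<eta>: "sqrt (2 * \<Theta>\<^sub>1 / m\<^sub>1) * erf_inv (1/2) = erf_inv (1/2) / sqrt a"
    using assms by (simp add: a_def real_sqrt_divide)
  have X: "\<rho>\<^sub>0 < 2 * \<kappa> * \<eta> \<longleftrightarrow> X < \<eta>" "\<rho>\<^sub>0\<^sup>2 / (4 * \<kappa>\<^sup>2) = X\<^sup>2" for \<eta>
    using assms by (auto simp: X_def field_simps power2_eq_square)
  obtain \<rho>\<^sub>1 where "0 < \<rho>\<^sub>1"
    and half: "\<And>\<xi>. 0 \<le> \<xi> \<Longrightarrow> \<xi> \<le> X \<Longrightarrow> 2 * erf (sqrt a * sqrt (\<rho>\<^sub>1\<^sup>2 + \<xi>\<^sup>2)) \<le> 1 + erf (sqrt a * \<xi>)"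
    and bound: "X < erf_inv (1/2) / sqrt a \<Longrightarrow> sqrt ((erf_inv (1/2) / sqrt a)\<^sup>2 - X\<^sup>2) \<le> \<rho>\<^sub>1"
    using exists_half_radius[OF \<open>0 < a\<close> \<open>0 < X\<close>] by blast
  have "(LINT w:{w. norm (w - v) \<le> \<rho>\<^sub>1}|lborel. maxwell_kernel c a \<xi> v w) \<le> 1/2 * (LINT w|lborel. maxwell_kernel c a \<xi> v w)"
    if "0 \<le> \<xi>" "\<xi> \<le> X" for v \<xi>
    using \<open>0 < a\<close> \<open>0 < \<rho>\<^sub>1\<close> that
    by (intro maxwell_kernel_ball_le_half ray_density_half half) (auto simp: c_def)
  then show ?thesis
    using \<open>0 < \<rho>\<^sub>1\<close> bound by (auto simp: M1_kernel \<eta> X X_def[symmetric])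
qed

end
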